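(* Let $I=(p_t)_{t\in[n]}$ be an instance and $\hat I=(\hat p_t)_{t\in[n]}$ a prediction. For every $S\subseteq[n]$, letting $\hat I_S$ be the instance with $t$-th entry $p_t$ for $t\in S$ and $\hat p_t$ for $t\notin S$, we have $\tau([1,n],I,\hat I)\ge\tau([1,n],I,\hat I_S)$ (monotonicity). Moreover $|\mathrm{opt}(I)-\mathrm{opt}(\hat I)|\le\tau([1,n],I,\hat I)$ (Lipschitzness).
   Context: Fix a real parameter $d>0$. An instance is a finite sequence $I=(p_t)_{t\in[T]}$ of nonnegative reals; instances of different lengths are compared by padding with zeros. A solution is a finite set $X=\{x_1<\dots<x_k\}\subseteq[T]$; it is feasible for $I$ if either all $p_t=0$, or $X\ne\emptyset$ and $\max X\ge\max\{t:p_t>0\}$. With $x_0:=0$, $F(I,X)=|X|+\frac1d\sum_{i=1}^{k}\sum_{t=x_{i-1}+1}^{x_i}p_t(x_i-t)$, and $\mathrm{opt}(I)=\min\{F(I,X): X\text{ feasible}\}$. For $a\le b$, the subinstance $I\langle a,b\rangle=(p_t)_{t\in\{a,\dots,b\}}$ is an instance on time set $\{a,\dots,b\}$ (solutions are subsets of $\{a,\dots,b\}$, cost formula with $x_0:=a-1$). For an actual instance $I=(p_t)$ and a predicted instance $\hat I=(\hat p_t)$ on the same time set, the overpredicted instance is $O(I,\hat I)=(\max\{p_t,\hat p_t\})_t$ and the underpredicted instance is $U(I,\hat I)=(\min\{p_t,\hat p_t\})_t$. The auxiliary error on $[t_1,t_2]$ is $\tau([t_1,t_2],I,\hat I)=\mathrm{opt}(O(I\langle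 t_1,t_2\rangle,\hat I\langle t_1,t_2\rangle))-\mathrm{opt}(U(I\langle t_1,t_2\rangle,\hat I\langle t_1,t_2\rangle))$. *)

theory Defs
  imports Main Complex_Main
begin

(* An instance on time set [n] = {1..n} is p :: nat => real; only values on {1..n} matter. *)

definition feasible :: "nat \<Rightarrow> (nat \<Rightarrow> real) \<Rightarrow> nat set \<Rightarrow> bool" where
  "feasible n p X \<longleftrightarrow> X \<subseteq> {1..n} \<and>
     ((\<forall>t\<in>{1..n}. p t = 0) \<or>
      (X \<noteq> {} \<and> Max X \<ge> Max {t\<in>{1..n}. p t > 0}))"

definition xpt :: "nat set \<Rightarrow> nat \<Rightarrow> nat" where
  "xpt X i = (if i = 0 then 0 else sorted_list_of_set X ! (i - 1))"

definition cost :: "real \<Rightarrow> (nat \<Rightarrow> real) \<Rightarrow> nat set \<Rightarrow> real" where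
  "cost d p X = real (card X) +
     (1 / d) * (\<Sum>i\<in>{1..card X}. \<Sum>t\<in>{xpt X (i - 1) + 1 .. xpt X i}.
                   p t * (real (xpt X i) - real t))"

definition opt :: "real \<Rightarrow> nat \<Rightarrow> (nat \<Rightarrow> real) \<Rightarrow> real" where
  "opt d n p = Min {cost d p X | X. feasible n p X}"

definition over_inst :: "(nat \<Rightarrow> real) \<Rightarrow> (nat \<Rightarrow> real) \<Rightarrow> (nat \<Rightarrow> real)" where
  "over_inst p ph = (\<lambda>t. max (p t) (ph t))"

definition under_inst :: "(nat \<Rightarrow> real) \<Rightarrow> (nat \<Rightarrow> real) \<Rightarrow> (nat \<Rightarrow> real)" where
  "under_inst p ph = (\<lambda>t. min (p t) (ph t))"

definition tau :: "real \<Rightarrow> nat \<Rightarrow> (nat \<Rightarrow> real) \<Rightarrow> (nat \<Rightarrow> real) \<Rightarrow> real" where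
  "tau d n p ph = opt d n (over_inst p ph) - opt d n (under_inst p ph)"

end

theory Submission
  imports Defs
begin

text \<open>Everything follows from one fact: \<open>opt\<close> is monotone under pointwise increase of a
nonnegative instance, because a solution feasible for the larger instance stays feasible for the
smaller one and its cost can only drop. Replacing \<open>\<hat>p\<close> by \<open>\<hat>p\<^sub>S\<close> shrinks the overpredicted
and enlarges the underpredicted instance pointwise, and both \<open>p\<close> and \<open>\<hat>p\<close> lie pointwise between
the underpredicted and the overpredicted instance.\<close>

lemma xpt_in_set:
  assumes "finite X" "1 \<le> i" "i \<le> card X"
  shows "xpt X i \<in> X"
proof -
  have "i - 1 < length (sorted_list_of_set X)" using assms by simp
  hence "sorted_list_of_set X ! (i - 1) \<in> set (sorted_list_of_set X)" by (rule nth_mem)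
  thus ?thesis using assms by (simp add: xpt_def)
qed

lemma finite_feasible_costs: "finite {cost d q X | X. feasible n q X}"
proof -
  have "{cost d q X | X. feasible n q X} \<subseteq> cost d q ` Pow {1..n}"
    unfolding feasible_def by auto
  thus ?thesis by (rule finite_subset) simp
qed

lemma feasible_all_times:
  assumes "\<forall>t\<in>{1..n}. q t \<ge> 0"
  shows "feasible n q {1..n}"
proof (cases "\<forall>t\<in>{1..n}. q t = 0")
  case False
  then obtain t where t: "t \<in> {1..n}" "q t > 0" using assms by force
  hence "Max {t\<in>{1..n}. q t > 0} \<le> n" by (subst Max_le_iff) auto
  moreover have "Max {1..n} = n" using t by (simp add: Max_eq_iff)
  ultimately show ?thesis using t unfolding feasible_def by auto
qed (simp add: feasible_def)

lemma opt_attained: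
  assumes "\<forall>t\<in>{1..n}. q t \<ge> 0"
  obtains X where "feasible n q X" "opt d n q = cost d q X"
proof -
  have "{cost d q X | X. feasible n q X} \<noteq> {}" using feasible_all_times[OF assms] by blast
  hence "opt d n q \<in> {cost d q X | X. feasible n q X}"
    unfolding opt_def by (rule Min_in[OF finite_feasible_costs])
  thus ?thesis using that by blast
qed

lemma opt_le_cost: "feasible n q X \<Longrightarrow> opt d n q \<le> cost d q X"
  unfolding opt_def by (intro Min_le finite_feasible_costs) blast

lemma feasible_antimono:
  assumes le: "\<forall>t\<in>{1..n}. 0 \<le> q t \<and> q t \<le> q' t" and X: "feasible n q' X"
  shows "feasible n q X"
proof (cases "\<forall>t\<in>{1..n}. q t = 0")
  case False
  then obtain s where s: "s \<in> {1..n}" "q s > 0" using le by force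
  hence "\<not> (\<forall>t\<in>{1..n}. q' t = 0)" using le by force
  hence X': "X \<subseteq> {1..n}" "X \<noteq> {}" "Max X \<ge> Max {t\<in>{1..n}. q' t > 0}"
    using X unfolding feasible_def by auto
  have "{t\<in>{1..n}. q t > 0} \<subseteq> {t\<in>{1..n}. q' t > 0}" using le by force
  hence "Max {t\<in>{1..n}. q t > 0} \<le> Max {t\<in>{1..n}. q' t > 0}"
    by (rule Max_mono) (use s in auto)
  thus ?thesis using X' unfolding feasible_def by auto
qed (use X in \<open>simp add: feasible_def\<close>)

lemma cost_mono:
  assumes "d \<ge> 0" and X: "X \<subseteq> {1..n}" and le: "\<forall>t\<in>{1..n}. q t \<le> q' t"
  shows "cost d q X \<le> cost d q' X"
proof -
  have "finite X" using X finite_subset by blast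
  have "(\<Sum>i\<in>{1..card X}. \<Sum>t\<in>{xpt X (i - 1) + 1 .. xpt X i}. q t * (real (xpt X i) - real t))
     \<le> (\<Sum>i\<in>{1..card X}. \<Sum>t\<in>{xpt X (i - 1) + 1 .. xpt X i}. q' t * (real (xpt X i) - real t))"
  proof (intro sum_mono)
    fix i t assume i: "i \<in> {1..card X}" and t: "t \<in> {xpt X (i - 1) + 1 .. xpt X i}"
    have "xpt X i \<in> X" using xpt_in_set[OF \<open>finite X\<close>] i by auto
    hence "q t \<le> q' t" using t X le by auto
    moreover have "real (xpt X i) - real t \<ge> 0" using t by auto
    ultimately show "q t * (real (xpt X i) - real t) \<le> q' t * (real (xpt X i) - real t)"
      by (rule mult_right_mono)
  qed
  thus ?thesis unfolding cost_def using \<open>d \<ge> 0\<close> by (simp add: divide_right_mono)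
qed

lemma opt_mono:
  assumes "d \<ge> 0" and le: "\<forall>t\<in>{1..n}. 0 \<le> q t \<and> q t \<le> q' t"
  shows "opt d n q \<le> opt d n q'"
proof -
  have "\<forall>t\<in>{1..n}. q' t \<ge> 0" using le by force
  then obtain X where X: "feasible n q' X" "opt d n q' = cost d q' X"
    by (rule opt_attained)
  have "opt d n q \<le> cost d q X" by (rule opt_le_cost[OF feasible_antimono[OF le X(1)]])
  also have "\<dots> \<le> cost d q' X"
    using cost_mono[OF \<open>d \<ge> 0\<close>] X(1) le unfolding feasible_def by auto
  finally show ?thesis using X(2) by simp
qed

theorem mainTheorem3:
  fixes d :: real and n :: nat and p ph :: "nat \<Rightarrow> real" and S :: "nat set"
  assumes "d > 0"
    and "\<forall>t\<in>{1..n}. p t \<ge> 0"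
    and "\<forall>t\<in>{1..n}. ph t \<ge> 0"
    and "S \<subseteq> {1..n}"
  shows "tau d n p ph \<ge> tau d n p (\<lambda>t. if t \<in> S then p t else ph t)
    \<and> \<bar>opt d n p - opt d n ph\<bar> \<le> tau d n p ph"
proof -
  let ?phS = "\<lambda>t. if t \<in> S then p t else ph t"
  have mono: "opt d n q \<le> opt d n q'" if "\<forall>t\<in>{1..n}. 0 \<le> q t \<and> q t \<le> q' t" for q q'
    using opt_mono[of d n q q'] that \<open>d > 0\<close> by simp
  have "opt d n (over_inst p ?phS) \<le> opt d n (over_inst p ph)"
    and "opt d n (under_inst p ph) \<le> opt d n (under_inst p ?phS)"
    and "opt d n (under_inst p ph) \<le> opt d n p"
    and "opt d n (under_inst p ph) \<le> opt d n ph"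
    and "opt d n p \<le> opt d n (over_inst p ph)"
    and "opt d n ph \<le> opt d n (over_inst p ph)"
    by (rule mono; use assms in \<open>auto simp: over_inst_def under_inst_def\<close>)+
  then show ?thesis unfolding tau_def by linarith
qed

end
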